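(* Consider the Harmonia state machine defined in the context below, with parameters a finite set $D$ of data items, an integer $N\ge 1$ (number of switches), a finite nonempty set $\mathit{Rep}$ of replicas, and a Boolean $\mathit{isReadBehind}$. Then in every state reachable from the initial state by a finite sequence of the actions listed below (with arbitrary choice of action and arguments at each step), the following invariant $\mathit{Linearizability}$ holds: for every message $m\in\mathit{messages}$ with $m.\mathit{mtype}=\mathrm{ReadResponse}$, (i) $m.\mathit{write}\succeq m.\mathit{ghost}$, and (ii) either $m.\mathit{write}=\bot$ or $m.\mathit{write}$ is an entry of $\mathit{CommittedLog}$. (Informally: Harmonia preserves linearizability of the underlying primary-backup/read-ahead or quorum/read-behind replication protocol, including across switch failovers.)
   Context: Harmonia is a replicated-storage scheme in which a network switch tracks a "dirty set" of objects with pending writes and routes reads of clean objects to a single replica. It is modeled as the following state machine. Writes. A write is a record $w=(\mathrm{Write}, \mathit{switchNum}, \mathit{seq}, \mathit{dataItem})$ with $\mathit{switchNum}\in\{1,\dots,N\}$, $\mathit{seq}\in\mathbb{N}_{\ge1}$, $\mathit{dataItem}\in D$. The special value $\bot$ has $\mathit{switchNum}=0,\ \mathit{seq}=0$ and no data item. Define $w_1\succeq w_2$ iff $w_1.\mathit{switchNum}>w_2.\mathit{switchNum}$, or $w_1.\mathit{switchNum}=w_2.\mathit{switchNum}$ and $w_1.\mathit{seq}\ge w_2.\mathit{seq}$; and $w_1\succ w_2$ iff $w_1.\mathit{switchNum}>w_2.\mathit{switchNum}$, or they are equal and $w_1.\mathit{seq}>w_2.\mathit{seq}$. For a finite nonempty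 set $W$ of writes (possibly including $\bot$), $\max W$ denotes an element $w\in W$ with $w\succeq w'$ for all $w'\in W$ (selected by a fixed deterministic choice function). State variables: $\mathit{messages}$ (a set of messages, initially empty); for each switch $s\in\{1,\dots,N\}$ a record $\mathit{sw}[s]$ with fields $\mathit{seq}\in\mathbb{N}$ (initially $0$), $\mathit{dirty}$ a finite partial function $D\rightharpoonup\mathbb{N}$ (initially empty domain), $\mathit{lastCommitted}$ a write or $\bot$ (initially $\bot$); $\mathit{active}\in\{1,\dots,N\}$ (initially $1$); $\mathit{log}$ a finite sequence of writes (initially empty); $\mathit{cp}:\mathit{Rep}\to\mathbb{N}$ (initially all $0$). Derived quantities: $\mathit{CommittedLog}=\mathit{log}$ if $\mathit{isReadBehind}$, and otherwise the prefix of $\mathit{log}$ of length $\min_{r\in\mathit{Rep}}\mathit{cp}[r]$. For a sequence $L$ of writes and $d\in D$, $\mathrm{MCW}(d,L)=\max(\{\bot\}\cup\{e \text{ entry of } L: e.\mathit{dataItem}=d\})$; $\mathrm{MCW}(d)=\mathrm{MCW}(d,\mathit{CommittedLog})$; $\mathrm{MCW}_{all}=\max(\{\bot\}\cup\{\text{entries of }\mathit{CommittedLog}\})$. Actions (each leaves unmentioned variables unchanged): 1. SendWrite$(s,d)$, $s\in\{1..N\}, d\in D$: enabled iff $s\le\mathit{active}$. Let $n=\mathit{sw}[s].\mathit{seq}+1$; set $\mathit{sw}[s].\mathit{seq}:=n$, set $\mathit{sw}[s].\mathit{dirty}(d):=n$ (adding or overriding), add the write $(\mathrm{Write},s,n,d)$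 to $\mathit{messages}$. 2. HandleWrite$(w)$ for a write $w\in\mathit{messages}$: enabled iff $\mathit{log}$ is empty or $w\succeq$ the last entry of $\mathit{log}$; appends $w$ to $\mathit{log}$. 3. ProcessWriteCompletion$(w)$ for $w$ an entry of $\mathit{log}$: enabled iff $\mathrm{MCW}_{all}\succeq w$. With $s=w.\mathit{switchNum}$: restrict $\mathit{sw}[s].\mathit{dirty}$ to those $d$ with $\mathit{sw}[s].\mathit{dirty}(d)>w.\mathit{seq}$, and set $\mathit{sw}[s].\mathit{lastCommitted}:=\max\{\mathit{sw}[s].\mathit{lastCommitted},w\}$. 4. CommitWrite$(r)$, $r\in\mathit{Rep}$: enabled iff $|\mathit{log}|>\mathit{cp}[r]$; sets $\mathit{cp}[r]:=\mathit{cp}[r]+1$. 5. SendRead$(s,d)$: let $\mathit{lr}=\max(\{\mathrm{MCW}(d)\}\cup\{m.\mathit{write}: m\in\mathit{messages},\ m.\mathit{mtype}=\mathrm{ReadResponse},\ m.\mathit{write}\ne\bot,\ m.\mathit{write}.\mathit{dataItem}=d\})$. If $d\notin\mathrm{dom}(\mathit{sw}[s].\mathit{dirty})$ and $\mathit{sw}[s].\mathit{lastCommitted}\succ\bot$, add message $(\mathrm{HarmoniaRead}, \mathit{dataItem}=d, \mathit{switchNum}=s, \mathit{lastCommitted}=\mathit{sw}[s].\mathit{lastCommitted}, \mathit{ghost}=\mathit{lr})$; otherwise add $(\mathrm{ProtocolRead},\mathit{dataItem}=d,\mathit{ghost}=\mathit{lr})$. 6. HandleProtocolRead$(m)$ for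 a ProtocolRead $m\in\mathit{messages}$: add $(\mathrm{ReadResponse}, \mathit{write}=\mathrm{MCW}(m.\mathit{dataItem}), \mathit{ghost}=m.\mathit{ghost})$. 7. HandleHarmoniaRead$(r,m)$ for $r\in\mathit{Rep}$ and a HarmoniaRead $m\in\mathit{messages}$: let $c=\mathit{cp}[r]$ and $w=\mathrm{MCW}(m.\mathit{dataItem}, \text{first } c \text{ entries of } \mathit{log})$. Enabled iff $m.\mathit{switchNum}=\mathit{active}$ and: if $\mathit{isReadBehind}$, then $(\mathit{log}[c]$ if $c>0$, else $\bot)\succeq m.\mathit{lastCommitted}$; if not $\mathit{isReadBehind}$ (read-ahead), then $m.\mathit{lastCommitted}\succeq w$. Adds $(\mathrm{ReadResponse},\mathit{write}=w,\mathit{ghost}=m.\mathit{ghost})$. 8. SwitchFailover: enabled iff $\mathit{active}<N$; sets $\mathit{active}:=\mathit{active}+1$. *)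

theory Defs
  imports Main
begin

datatype 'd wr = Bot | Wr nat nat 'd

fun switchNum :: "'d wr \<Rightarrow> nat" where
  "switchNum Bot = 0"
| "switchNum (Wr s n d) = s"

fun wseq :: "'d wr \<Rightarrow> nat" where
  "wseq Bot = 0"
| "wseq (Wr s n d) = n"

fun wdata :: "'d wr \<Rightarrow> 'd option" where
  "wdata Bot = None"
| "wdata (Wr s n d) = Some d"

definition wge :: "'d wr \<Rightarrow> 'd wr \<Rightarrow> bool" where
  "wge w1 w2 \<longleftrightarrow> switchNum w1 > switchNum w2
     \<or> (switchNum w1 = switchNum w2 \<and> wseq w1 \<ge> wseq w2)"

definition wgt :: "'d wr \<Rightarrow> 'd wr \<Rightarrow> bool" where
  "wgt w1 w2 \<longleftrightarrow> switchNum w1 > switchNum w2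
     \<or> (switchNum w1 = switchNum w2 \<and> wseq w1 > wseq w2)"

definition is_max_choice :: "('d wr set \<Rightarrow> 'd wr) \<Rightarrow> bool" where
  "is_max_choice mx \<longleftrightarrow>
     (\<forall>W. finite W \<and> W \<noteq> {} \<longrightarrow> mx W \<in> W \<and> (\<forall>w\<in>W. wge (mx W) w))"

datatype 'd msg =
    MWrite nat nat 'd
  | HarmoniaRead 'd nat "'d wr" "'d wr" \<comment> \<open>dataItem, switchNum, lastCommitted, ghost\<close>
  | ProtocolRead 'd "'d wr"                \<comment> \<open>dataItem, ghost\<close>
  | ReadResponse "'d wr" "'d wr"        \<comment> \<open>write, ghost\<close>

record 'd swstate =
  sseq :: nat
  dirty :: "'d \<rightharpoonup> nat"
  lastCommitted :: "'d wr"

record ('d, 'r) hstate =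
  messages :: "'d msg set"
  sw :: "nat \<Rightarrow> 'd swstate"
  active :: nat
  hlog :: "'d wr list"
  cp :: "'r \<Rightarrow> nat"

definition init_state :: "('d, 'r) hstate" where
  "init_state = \<lparr> messages = {},
                  sw = (\<lambda>_. \<lparr> sseq = 0, dirty = Map.empty, lastCommitted = Bot \<rparr>),
                  active = 1, hlog = [], cp = (\<lambda>_. 0) \<rparr>"

definition CommittedLog :: "'r set \<Rightarrow> bool \<Rightarrow> ('d, 'r) hstate \<Rightarrow> 'd wr list" where
  "CommittedLog Rep isReadBehind st =
     (if isReadBehind then hlog st else take (Min (cp st ` Rep)) (hlog st))"

definition MCWL :: "('d wr set \<Rightarrow> 'd wr) \<Rightarrow> 'd \<Rightarrow> 'd wr list \<Rightarrow> 'd wr" where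
  "MCWL mx d L = mx ({Bot} \<union> {e. e \<in> set L \<and> wdata e = Some d})"

definition MCW :: "('d wr set \<Rightarrow> 'd wr) \<Rightarrow> 'r set \<Rightarrow> bool \<Rightarrow> ('d, 'r) hstate \<Rightarrow> 'd \<Rightarrow> 'd wr" where
  "MCW mx Rep isReadBehind st d = MCWL mx d (CommittedLog Rep isReadBehind st)"

definition MCW_all :: "('d wr set \<Rightarrow> 'd wr) \<Rightarrow> 'r set \<Rightarrow> bool \<Rightarrow> ('d, 'r) hstate \<Rightarrow> 'd wr" where
  "MCW_all mx Rep isReadBehind st = mx ({Bot} \<union> set (CommittedLog Rep isReadBehind st))"

inductive step :: "'d set \<Rightarrow> nat \<Rightarrow> 'r set \<Rightarrow> bool \<Rightarrow> ('d wr set \<Rightarrow> 'd wr)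
                    \<Rightarrow> ('d, 'r) hstate \<Rightarrow> ('d, 'r) hstate \<Rightarrow> bool"
  for D N Rep isReadBehind mx where
  SendWrite:
  "\<lbrakk> s \<in> {1..N}; d \<in> D; s \<le> active st; n = sseq (sw st s) + 1 \<rbrakk> \<Longrightarrow>
   step D N Rep isReadBehind mx st
     (st\<lparr> sw := (sw st)(s := (sw st s)\<lparr> sseq := n, dirty := (dirty (sw st s))(d \<mapsto> n) \<rparr>),
          messages := insert (MWrite s n d) (messages st) \<rparr>)"
| HandleWrite:
  "\<lbrakk> MWrite s n d \<in> messages st; hlog st = [] \<or> wge (Wr s n d) (last (hlog st)) \<rbrakk> \<Longrightarrow>
   step D N Rep isReadBehind mx st (st\<lparr> hlog := hlog st @ [Wr s n d] \<rparr>)"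
| ProcessWriteCompletion:
  "\<lbrakk> w \<in> set (hlog st); wge (MCW_all mx Rep isReadBehind st) w; s = switchNum w \<rbrakk> \<Longrightarrow>
   step D N Rep isReadBehind mx st
     (st\<lparr> sw := (sw st)(s := (sw st s)\<lparr>
            dirty := (\<lambda>d. case dirty (sw st s) d of
                             None \<Rightarrow> None
                           | Some k \<Rightarrow> (if k > wseq w then Some k else None)),
            lastCommitted := mx {lastCommitted (sw st s), w} \<rparr>) \<rparr>)"
| CommitWrite:
  "\<lbrakk> r \<in> Rep; length (hlog st) > cp st r \<rbrakk> \<Longrightarrow>
   step D N Rep isReadBehind mx st (st\<lparr> cp := (cp st)(r := cp st r + 1) \<rparr>)"
| SendRead:
  "\<lbrakk> s \<in> {1..N}; d \<in> D;
     lr = mx ({MCW mx Rep isReadBehind st d} \<union>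
              {w. \<exists>g. ReadResponse w g \<in> messages st \<and> w \<noteq> Bot \<and> wdata w = Some d});
     m = (if d \<notin> dom (dirty (sw st s)) \<and> wgt (lastCommitted (sw st s)) Bot
          then HarmoniaRead d s (lastCommitted (sw st s)) lr
          else ProtocolRead d lr) \<rbrakk> \<Longrightarrow>
   step D N Rep isReadBehind mx st (st\<lparr> messages := insert m (messages st) \<rparr>)"
| HandleProtocolRead:
  "ProtocolRead d g \<in> messages st \<Longrightarrow>
   step D N Rep isReadBehind mx st
     (st\<lparr> messages := insert (ReadResponse (MCW mx Rep isReadBehind st d) g) (messages st) \<rparr>)"
| HandleHarmoniaRead:
  "\<lbrakk> r \<in> Rep; HarmoniaRead d s lc g \<in> messages st; c = cp st r;
     w = MCWL mx d (take c (hlog st)); s = active st;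
     if isReadBehind then wge (if c > 0 then hlog st ! (c - 1) else Bot) lc
     else wge lc w \<rbrakk> \<Longrightarrow>
   step D N Rep isReadBehind mx st
     (st\<lparr> messages := insert (ReadResponse w g) (messages st) \<rparr>)"
| SwitchFailover:
  "active st < N \<Longrightarrow>
   step D N Rep isReadBehind mx st (st\<lparr> active := active st + 1 \<rparr>)"

inductive reachable :: "'d set \<Rightarrow> nat \<Rightarrow> 'r set \<Rightarrow> bool \<Rightarrow> ('d wr set \<Rightarrow> 'd wr)
                         \<Rightarrow> ('d, 'r) hstate \<Rightarrow> bool"
  for D N Rep isReadBehind mx where
  init: "reachable D N Rep isReadBehind mx init_state"
| stepI: "\<lbrakk> reachable D N Rep isReadBehind mx st; step D N Rep isReadBehind mx st st' \<rbrakk> \<Longrightarrow>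
          reachable D N Rep isReadBehind mx st'"

definition Linearizability :: "'r set \<Rightarrow> bool \<Rightarrow> ('d, 'r) hstate \<Rightarrow> bool" where
  "Linearizability Rep isReadBehind st \<longleftrightarrow>
     (\<forall>w g. ReadResponse w g \<in> messages st \<longrightarrow>
        wge w g \<and> (w = Bot \<or> w \<in> set (CommittedLog Rep isReadBehind st)))"

end

theory Submission
  imports Defs
begin

text \<open>
  The log is sorted with respect to the write order,
  and since every pair (switch, sequence number) is issued only once it contains no two
  equivalent writes; hence each of its prefixes, in particular the committed log, is
  downward closed within the log. The Harmonia-specific part of the invariant says that every
  issued write is either still in the dirty set of its switch or dominated by that switch's
  lastCommitted, which is itself committed. Consequently the ghost of a single-replica read
  sent by switch s is dominated by lastCommitted s unless s has been failed over: committed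
  writes of earlier switches are smaller by switch number, those of s are covered because the
  item is clean, and those of later switches only exist once s is no longer active. The
  replica's enabling condition then places the ghost (read-behind) or the returned write
  (read-ahead) inside the committed prefix.
\<close>

lemma wge_Bot [simp]: "wge w Bot"
  by (cases w) (auto simp: wge_def)

lemma wge_trans: "wge a b \<Longrightarrow> wge b c \<Longrightarrow> wge a c"
  by (auto simp: wge_def)

lemma transp_wge_converse: "transp (\<lambda>a b. wge b a)"
  by (auto intro: transpI wge_trans)

lemma wge_antisym: "wge a b \<Longrightarrow> wge b a \<Longrightarrow> switchNum a = switchNum b \<and> wseq a = wseq b"
  by (auto simp: wge_def)

lemma wgt_Bot_not_wge_Bot: "wgt w Bot \<Longrightarrow> \<not> wge Bot w"
  by (auto simp: wge_def wgt_def)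

lemma is_max_choice_mem: "is_max_choice mx \<Longrightarrow> finite W \<Longrightarrow> W \<noteq> {} \<Longrightarrow> mx W \<in> W"
  by (simp add: is_max_choice_def)

lemma is_max_choice_ge: "is_max_choice mx \<Longrightarrow> finite W \<Longrightarrow> w \<in> W \<Longrightarrow> wge (mx W) w"
  by (auto simp: is_max_choice_def)

lemma MCWL_cases:
  assumes "is_max_choice mx"
  shows "MCWL mx d L = Bot \<or> MCWL mx d L \<in> set L \<and> wdata (MCWL mx d L) = Some d"
  using is_max_choice_mem[OF assms, of "{Bot} \<union> {e. e \<in> set L \<and> wdata e = Some d}"]
  by (auto simp: MCWL_def)

lemma MCWL_ge:
  assumes "is_max_choice mx" "e \<in> set L" "wdata e = Some d"
  shows "wge (MCWL mx d L) e"
  unfolding MCWL_def by (rule is_max_choice_ge) (use assms in auto)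

lemma sorted_wrt_snoc:
  assumes "transp P" "sorted_wrt P xs" "xs = [] \<or> P (last xs) y"
  shows "sorted_wrt P (xs @ [y])"
proof (cases xs rule: rev_cases)
  case (snoc ys z)
  then show ?thesis using assms by (auto simp: sorted_wrt_append dest: transpD[OF assms(1)])
qed simp

lemma sorted_wrt_take_downward_closed:
  assumes sorted: "sorted_wrt P xs"
    and antisym: "\<forall>a\<in>set xs. \<forall>b\<in>set xs. P a b \<longrightarrow> P b a \<longrightarrow> a = b"
    and e: "e \<in> set (take k xs)" and x: "x \<in> set xs" "P x e"
  shows "x \<in> set (take k xs)"
proof -
  obtain j where j: "j < k" "j < length xs" "xs ! j = e"
    using e by (auto simp: in_set_conv_nth)
  obtain i where i: "i < length xs" "xs ! i = x"
    using x by (auto simp: in_set_conv_nth)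
  show ?thesis
  proof (cases "i < k")
    case True
    then show ?thesis using i by (auto simp: in_set_conv_nth)
  next
    case False
    then have "P e x" using sorted_wrt_nth_less[OF sorted, of j i] i j by simp
    then have "x = e" using antisym e x by (meson in_set_takeD)
    then show ?thesis using e by simp
  qed
qed

lemma set_take_append_mono: "k \<le> k' \<Longrightarrow> set (take k xs) \<subseteq> set (take k' (xs @ ys))"
  by (auto simp: set_take_subset_set_take[THEN subsetD])

locale harmonia =
  fixes Rep :: "'r set" and rb :: bool and mx :: "'d wr set \<Rightarrow> 'd wr"
  assumes finite_Rep: "finite Rep" and Rep_nonempty: "Rep \<noteq> {}"
    and max_choice: "is_max_choice mx"
begin

abbreviation CL :: "('d, 'r) hstate \<Rightarrow> 'd wr list" where
  "CL st \<equiv> CommittedLog Rep rb st"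

definition commit_index :: "('d, 'r) hstate \<Rightarrow> nat" where
  "commit_index st = (if rb then length (hlog st) else Min (cp st ` Rep))"

lemma CL_eq_take: "CL st = take (commit_index st) (hlog st)"
  by (simp add: CommittedLog_def commit_index_def)

lemma commit_index_le_cp: "\<not> rb \<Longrightarrow> r \<in> Rep \<Longrightarrow> commit_index st \<le> cp st r"
  unfolding commit_index_def using finite_Rep by simp

lemma set_CL_mono:
  assumes "hlog st' = hlog st @ xs" "\<forall>r. cp st r \<le> cp st' r"
  shows "set (CL st) \<subseteq> set (CL st')"
proof -
  have "commit_index st \<le> commit_index st'"
    unfolding commit_index_def using assms finite_Rep Rep_nonempty
    by (auto intro: Min_le[THEN order_trans])
  then show ?thesis
    unfolding CL_eq_take assms(1) by (rule set_take_append_mono)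
qed

definition committed_or_bot :: "('d, 'r) hstate \<Rightarrow> 'd \<Rightarrow> 'd wr \<Rightarrow> bool" where
  "committed_or_bot st d g \<longleftrightarrow> g = Bot \<or> g \<in> set (CL st) \<and> wdata g = Some d"

definition write_tracked :: "('d, 'r) hstate \<Rightarrow> nat \<Rightarrow> nat \<Rightarrow> 'd \<Rightarrow> bool" where
  "write_tracked st s n d \<longleftrightarrow> 1 \<le> s \<and> s \<le> active st \<and> n \<le> sseq (sw st s) \<and>
     ((\<exists>k. dirty (sw st s) d = Some k \<and> n \<le> k) \<or> wge (lastCommitted (sw st s)) (Wr s n d))"

definition read_ok :: "('d, 'r) hstate \<Rightarrow> 'd msg \<Rightarrow> bool" where
  "read_ok st m = (case m of
     MWrite _ _ _ \<Rightarrow> True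
   | ProtocolRead d g \<Rightarrow> committed_or_bot st d g
   | HarmoniaRead d s lc g \<Rightarrow> committed_or_bot st d g \<and> lc \<in> set (CL st) \<and> wgt lc Bot \<and>
       switchNum lc = s \<and> (g = Bot \<or> wge lc g \<or> s < active st)
       \<comment> \<open>the ghost bound may fail only for a failed-over switch, whose reads are never served\<close>
   | ReadResponse w g \<Rightarrow> wge w g \<and> (w = Bot \<or> w \<in> set (CL st)))"

lemma read_ok_mono:
  "read_ok st m \<Longrightarrow> set (CL st) \<subseteq> set (CL st') \<Longrightarrow> active st \<le> active st' \<Longrightarrow> read_ok st' m"
  by (cases m) (auto simp: read_ok_def committed_or_bot_def)

definition invariant :: "('d, 'r) hstate \<Rightarrow> bool" where
  "invariant st \<longleftrightarrow>
     finite (messages st) \<and>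
     sorted_wrt (\<lambda>a b. wge b a) (hlog st) \<and>
     (\<forall>r. cp st r \<le> length (hlog st)) \<and>
     (\<forall>w\<in>set (hlog st). \<exists>s n d. w = Wr s n d \<and> MWrite s n d \<in> messages st) \<and>
     (\<forall>s n d d'. MWrite s n d \<in> messages st \<longrightarrow> MWrite s n d' \<in> messages st \<longrightarrow> d = d') \<and>
     (\<forall>s n d. MWrite s n d \<in> messages st \<longrightarrow> write_tracked st s n d) \<and>
     (\<forall>s. lastCommitted (sw st s) = Bot \<or>
          lastCommitted (sw st s) \<in> set (CL st) \<and> switchNum (lastCommitted (sw st s)) = s) \<and>
     (\<forall>m\<in>messages st. read_ok st m)"

lemma
  assumes "invariant st"
  shows invariant_finite_messages: "finite (messages st)"
    and invariant_sorted_log: "sorted_wrt (\<lambda>a b. wge b a) (hlog st)"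
    and invariant_cp_le_length: "cp st r \<le> length (hlog st)"
    and invariant_log_sent: "w \<in> set (hlog st) \<Longrightarrow> \<exists>s n d. w = Wr s n d \<and> MWrite s n d \<in> messages st"
    and invariant_write_unique: "MWrite s n d \<in> messages st \<Longrightarrow> MWrite s n d' \<in> messages st \<Longrightarrow> d = d'"
    and invariant_write_tracked: "MWrite s n d \<in> messages st \<Longrightarrow> write_tracked st s n d"
    and invariant_lastCommitted: "lastCommitted (sw st s) = Bot \<or>
          lastCommitted (sw st s) \<in> set (CL st) \<and> switchNum (lastCommitted (sw st s)) = s"
    and invariant_read_ok: "m \<in> messages st \<Longrightarrow> read_ok st m"
  using assms unfolding invariant_def by blast+

lemma invariant_init: "invariant init_state"
  by (simp add: invariant_def init_state_def CommittedLog_def)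

lemma invariant_log_antisym:
  assumes "invariant st"
  shows "\<forall>a\<in>set (hlog st). \<forall>b\<in>set (hlog st). wge b a \<longrightarrow> wge a b \<longrightarrow> a = b"
proof (intro ballI impI)
  fix a b assume ab: "a \<in> set (hlog st)" "b \<in> set (hlog st)" "wge b a" "wge a b"
  obtain s n d s' n' d' where "a = Wr s n d" "MWrite s n d \<in> messages st"
    "b = Wr s' n' d'" "MWrite s' n' d' \<in> messages st"
    using invariant_log_sent[OF assms ab(1)] invariant_log_sent[OF assms ab(2)] by blast
  with wge_antisym[OF ab(3,4)] invariant_write_unique[OF assms] show "a = b" by auto
qed

lemma committed_downward_closed:
  assumes "invariant st" "e \<in> set (CL st)" "w \<in> set (hlog st)" "wge e w"
  shows "w \<in> set (CL st)"
  using sorted_wrt_take_downward_closed[OF invariant_sorted_log invariant_log_antisym] assms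
  unfolding CL_eq_take by blast

lemma invariant_grow:
  assumes I: "invariant st"
    and same: "messages st' = messages st" "sw st' = sw st"
    and active: "active st \<le> active st'"
    and log: "hlog st' = hlog st @ xs" and cp: "\<forall>r. cp st r \<le> cp st' r"
    and sorted: "sorted_wrt (\<lambda>a b. wge b a) (hlog st')"
    and cp_le: "\<forall>r. cp st' r \<le> length (hlog st')"
    and sent: "\<forall>w\<in>set xs. \<exists>s n d. w = Wr s n d \<and> MWrite s n d \<in> messages st"
  shows "invariant st'"
proof -
  have CL: "set (CL st) \<subseteq> set (CL st')"
    using log cp by (rule set_CL_mono)
  have "write_tracked st' s n d" if "MWrite s n d \<in> messages st" for s n d
    using invariant_write_tracked[OF I that] same active by (auto simp: write_tracked_def)
  moreover have "read_ok st' m" if "m \<in> messages st" for m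
    using read_ok_mono[OF invariant_read_ok[OF I that] CL active] .
  ultimately show ?thesis
    using I CL same sorted cp_le sent log unfolding invariant_def by auto
qed

lemma invariant_HandleWrite:
  assumes I: "invariant st" and sent: "MWrite s n d \<in> messages st"
    and above: "hlog st = [] \<or> wge (Wr s n d) (last (hlog st))"
  shows "invariant (st\<lparr> hlog := hlog st @ [Wr s n d] \<rparr>)"
proof (rule invariant_grow[OF I])
  show "sorted_wrt (\<lambda>a b. wge b a) (hlog (st\<lparr> hlog := hlog st @ [Wr s n d] \<rparr>))"
    using sorted_wrt_snoc[OF transp_wge_converse invariant_sorted_log[OF I] above] by simp
qed (use sent invariant_cp_le_length[OF I] in \<open>auto intro: le_SucI\<close>)

lemma invariant_CommitWrite:
  assumes I: "invariant st" and pending: "cp st r < length (hlog st)"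
  shows "invariant (st\<lparr> cp := (cp st)(r := cp st r + 1) \<rparr>)"
  by (rule invariant_grow[OF I, where xs = "[]"])
    (use invariant_sorted_log[OF I] invariant_cp_le_length[OF I] pending in auto)

lemma invariant_SwitchFailover:
  assumes I: "invariant st"
  shows "invariant (st\<lparr> active := active st + 1 \<rparr>)"
  by (rule invariant_grow[OF I, where xs = "[]"])
    (use invariant_sorted_log[OF I] invariant_cp_le_length[OF I] in auto)

lemma invariant_add_read:
  assumes I: "invariant st" and ok: "read_ok st m" and not_write: "\<forall>s n d. m \<noteq> MWrite s n d"
  shows "invariant (st\<lparr> messages := insert m (messages st) \<rparr>)"
proof -
  let ?st' = "st\<lparr> messages := insert m (messages st) \<rparr>"
  have "CL ?st' = CL st" "write_tracked ?st' = write_tracked st" "read_ok ?st' = read_ok st"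
    by (simp_all add: CommittedLog_def committed_or_bot_def
        write_tracked_def read_ok_def fun_eq_iff split: msg.split)
  then show ?thesis
    using I ok not_write unfolding invariant_def by auto
qed

lemma invariant_SendWrite:
  assumes I: "invariant st" and s: "1 \<le> s" "s \<le> active st" and n: "n = sseq (sw st s) + 1"
  shows "invariant (st\<lparr> sw := (sw st)(s := (sw st s)\<lparr> sseq := n, dirty := (dirty (sw st s))(d \<mapsto> n) \<rparr>),
                  messages := insert (MWrite s n d) (messages st) \<rparr>)"
    (is "invariant ?st'")
proof -
  have fresh: "n' < n" if "MWrite s n' d' \<in> messages st" for n' d'
    using invariant_write_tracked[OF I that] n by (simp add: write_tracked_def)
  have CL: "CL ?st' = CL st"
    by (simp add: CommittedLog_def)
  have read: "read_ok ?st' = read_ok st"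
    by (simp add: CL read_ok_def committed_or_bot_def fun_eq_iff split: msg.split)
  have "write_tracked ?st' s' n' d'" if sent: "MWrite s' n' d' \<in> messages ?st'" for s' n' d'
  proof -
    consider "s' = s" "n' = n" "d' = d" | "MWrite s' n' d' \<in> messages st"
      using sent by auto
    then show ?thesis
    proof cases
      case 2
      then show ?thesis
        using invariant_write_tracked[OF I 2] fresh[of n' d'] by (auto simp: write_tracked_def)
    qed (use s in \<open>simp add: write_tracked_def\<close>)
  qed
  moreover have "MWrite s n d' \<notin> messages st" for d'
    using fresh by blast
  ultimately show ?thesis
    using I CL read unfolding invariant_def by (auto simp: read_ok_def)
qed

lemma completed_write_committed:
  assumes I: "invariant st" and w: "w \<in> set (hlog st)" and ge: "wge (MCW_all mx Rep rb st) w"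
  shows "w \<in> set (CL st)"
proof -
  let ?W = "{Bot} \<union> set (CL st)"
  have "MCW_all mx Rep rb st \<in> ?W"
    unfolding MCW_all_def by (rule is_max_choice_mem[OF max_choice]) auto
  moreover have "\<not> wge Bot w"
  proof -
    obtain s n d where "w = Wr s n d" "MWrite s n d \<in> messages st"
      using invariant_log_sent[OF I w] by blast
    then show ?thesis
      using invariant_write_tracked[OF I] by (fastforce simp: wge_def write_tracked_def)
  qed
  ultimately have "MCW_all mx Rep rb st \<in> set (CL st)"
    using ge by auto
  then show ?thesis
    using committed_downward_closed[OF I _ w ge] by blast
qed

lemma invariant_ProcessWriteCompletion:
  assumes I: "invariant st" and w: "w \<in> set (hlog st)" and ge: "wge (MCW_all mx Rep rb st) w"
    and s: "s = switchNum w"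
  shows "invariant (st\<lparr> sw := (sw st)(s := (sw st s)\<lparr>
            dirty := (\<lambda>d. case dirty (sw st s) d of
                             None \<Rightarrow> None
                           | Some k \<Rightarrow> (if k > wseq w then Some k else None)),
            lastCommitted := mx {lastCommitted (sw st s), w} \<rparr>) \<rparr>)"
    (is "invariant ?st'")
proof -
  define lc where "lc = lastCommitted (sw st s)"
  define lc' where "lc' = mx {lc, w}"
  have lc': "lc' \<in> {lc, w}" "wge lc' lc" "wge lc' w"
    using is_max_choice_mem[OF max_choice, of "{lc, w}"] is_max_choice_ge[OF max_choice, of "{lc, w}"]
    unfolding lc'_def by auto
  have CL: "CL ?st' = CL st"
    by (simp add: CommittedLog_def)
  have read: "read_ok ?st' = read_ok st"
    by (simp add: CL read_ok_def committed_or_bot_def fun_eq_iff split: msg.split)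
  have "lc' = Bot \<or> lc' \<in> set (CL st) \<and> switchNum lc' = s"
    using lc'(1) invariant_lastCommitted[OF I, of s] completed_write_committed[OF I w ge] s
    unfolding lc_def by auto
  then have committed: "lastCommitted (sw ?st' s') = Bot \<or>
      lastCommitted (sw ?st' s') \<in> set (CL st) \<and> switchNum (lastCommitted (sw ?st' s')) = s'" for s'
    using invariant_lastCommitted[OF I, of s'] by (simp add: lc'_def lc_def)
  have "write_tracked ?st' s' n d" if sent: "MWrite s' n d \<in> messages st" for s' n d
  proof (cases "s' = s")
    case True
    have "(\<exists>k. dirty (sw st s) d = Some k \<and> n \<le> k) \<or> wge lc (Wr s n d)"
      using invariant_write_tracked[OF I sent] True by (simp add: write_tracked_def lc_def)
    \<comment> \<open>the dirty entries that are dropped are not newer than \<open>w\<close>, which covers them\<close>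
    moreover have "wge w (Wr s n d)" if "n \<le> wseq w"
      using that s by (simp add: wge_def)
    ultimately have "(\<exists>k. dirty (sw st s) d = Some k \<and> n \<le> k \<and> wseq w < k) \<or> wge lc' (Wr s n d)"
      using lc'(2,3) wge_trans by (meson le_trans not_less)
    then show ?thesis
      using invariant_write_tracked[OF I sent] True by (auto simp: write_tracked_def lc'_def lc_def)
  next
    case False
    then show ?thesis
      using invariant_write_tracked[OF I sent] by (simp add: write_tracked_def)
  qed
  then show ?thesis
    using I CL read committed unfolding invariant_def by simp
qed

lemma committed_or_bot_MCW: "committed_or_bot st d (MCW mx Rep rb st d)"
  using MCWL_cases[OF max_choice, of d "CL st"] by (auto simp: MCW_def committed_or_bot_def)

lemma read_ok_HandleProtocolRead:
  assumes I: "invariant st" and read: "ProtocolRead d g \<in> messages st"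
  shows "read_ok st (ReadResponse (MCW mx Rep rb st d) g)"
proof -
  have "committed_or_bot st d g"
    using invariant_read_ok[OF I read] by (simp add: read_ok_def)
  then have "wge (MCW mx Rep rb st d) g"
    using MCWL_ge[OF max_choice] unfolding committed_or_bot_def MCW_def by auto
  then show ?thesis
    using committed_or_bot_MCW[of st d] by (auto simp: read_ok_def committed_or_bot_def)
qed

lemma committed_or_bot_read_ghost:
  assumes I: "invariant st"
    and lr: "lr = mx ({MCW mx Rep rb st d} \<union>
                {w. \<exists>g. ReadResponse w g \<in> messages st \<and> w \<noteq> Bot \<and> wdata w = Some d})"
  shows "committed_or_bot st d lr"
proof -
  define R where "R = {w. \<exists>g. ReadResponse w g \<in> messages st \<and> w \<noteq> Bot \<and> wdata w = Some d}"
  have "R \<subseteq> (\<lambda>m. case m of ReadResponse w g \<Rightarrow> w | _ \<Rightarrow> Bot) ` messages st"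
    unfolding R_def by (force simp: image_iff)
  then have "finite R"
    using invariant_finite_messages[OF I] by (meson finite_imageI finite_subset)
  then have "lr \<in> {MCW mx Rep rb st d} \<union> R"
    unfolding lr R_def by (intro is_max_choice_mem[OF max_choice]) (auto simp: R_def)
  then show ?thesis
  proof
    assume "lr \<in> R"
    then obtain g where "ReadResponse lr g \<in> messages st" "lr \<noteq> Bot" "wdata lr = Some d"
      unfolding R_def by blast
    then show ?thesis
      using invariant_read_ok[OF I] by (fastforce simp: read_ok_def committed_or_bot_def)
  qed (use committed_or_bot_MCW in simp)
qed

lemma clean_read_ghost_covered:
  assumes I: "invariant st" and g: "committed_or_bot st d g"
    and clean: "dirty (sw st s) d = None" and lc: "lastCommitted (sw st s) \<noteq> Bot"
  shows "g = Bot \<or> wge (lastCommitted (sw st s)) g \<or> s < active st"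
proof (cases "g = Bot")
  case False
  then have "g \<in> set (hlog st)" "wdata g = Some d"
    using g set_take_subset[of _ "hlog st"] by (auto simp: committed_or_bot_def CL_eq_take)
  then obtain s' n where g_eq: "g = Wr s' n d" "MWrite s' n d \<in> messages st"
    using invariant_log_sent[OF I] by fastforce
  have tracked: "write_tracked st s' n d"
    using invariant_write_tracked[OF I g_eq(2)] .
  have "switchNum (lastCommitted (sw st s)) = s"
    using invariant_lastCommitted[OF I, of s] lc by simp
  then consider "s' < s" | "s' = s" | "s < s'"
    by (cases s' s rule: linorder_cases) auto
  then show ?thesis
  proof cases
    case 1
    then show ?thesis using \<open>switchNum (lastCommitted (sw st s)) = s\<close> g_eq by (simp add: wge_def)
  next
    case 2
    then show ?thesis using tracked clean g_eq by (simp add: write_tracked_def)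
  next
    case 3
    then show ?thesis using tracked by (simp add: write_tracked_def)
  qed
qed simp

lemma read_ok_SendRead:
  assumes I: "invariant st"
    and lr: "lr = mx ({MCW mx Rep rb st d} \<union>
                {w. \<exists>g. ReadResponse w g \<in> messages st \<and> w \<noteq> Bot \<and> wdata w = Some d})"
  shows "read_ok st (if d \<notin> dom (dirty (sw st s)) \<and> wgt (lastCommitted (sw st s)) Bot
                     then HarmoniaRead d s (lastCommitted (sw st s)) lr
                     else ProtocolRead d lr)"
proof -
  have ghost: "committed_or_bot st d lr"
    using committed_or_bot_read_ghost[OF I lr] .
  show ?thesis
  proof (cases "d \<notin> dom (dirty (sw st s)) \<and> wgt (lastCommitted (sw st s)) Bot")
    case True
    then have "lastCommitted (sw st s) \<noteq> Bot"
      using wgt_Bot_not_wge_Bot by fastforce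
    then show ?thesis
      using True ghost invariant_lastCommitted[OF I, of s] clean_read_ghost_covered[OF I ghost, of s]
      by (auto simp: read_ok_def)
  qed (use ghost in \<open>auto simp: read_ok_def\<close>)
qed

lemma harmonia_read_ghost_in_replica:
  assumes I: "invariant st" and r: "r \<in> Rep" and read: "HarmoniaRead d s lc g \<in> messages st"
    and active: "s = active st"
    and behind: "rb \<Longrightarrow> wge (if cp st r > 0 then hlog st ! (cp st r - 1) else Bot) lc"
    and g: "g \<noteq> Bot"
  shows "g \<in> set (take (cp st r) (hlog st)) \<and> wdata g = Some d"
proof -
  let ?c = "cp st r"
  have committed: "g \<in> set (CL st)" "wdata g = Some d" and lc: "wgt lc Bot" "wge lc g"
    using invariant_read_ok[OF I read] active g by (auto simp: read_ok_def committed_or_bot_def)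
  have "g \<in> set (take ?c (hlog st))"
  proof (cases rb)
    case True
    have "?c \<noteq> 0"
      using behind True wgt_Bot_not_wge_Bot[OF lc(1)] by (auto split: if_splits)
    then have "hlog st ! (?c - 1) \<in> set (take ?c (hlog st))"
      using invariant_cp_le_length[OF I, of r] by (auto simp: in_set_conv_nth intro: exI[of _ "?c - 1"])
    moreover have "wge (hlog st ! (?c - 1)) g"
      using behind True \<open>?c \<noteq> 0\<close> lc(2) wge_trans by auto
    moreover have "g \<in> set (hlog st)"
      using committed(1) unfolding CL_eq_take by (rule in_set_takeD)
    ultimately show ?thesis
      using sorted_wrt_take_downward_closed[OF invariant_sorted_log[OF I] invariant_log_antisym[OF I]]
      by blast
  next
    case False
    show ?thesis
      using set_take_subset_set_take[OF commit_index_le_cp[OF False r, of st], of "hlog st"]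
        committed(1)
      unfolding CL_eq_take by blast
  qed
  then show ?thesis
    using committed(2) by simp
qed

lemma read_ok_HandleHarmoniaRead:
  assumes I: "invariant st" and r: "r \<in> Rep" and read: "HarmoniaRead d s lc g \<in> messages st"
    and active: "s = active st"
    and enabled: "if rb then wge (if cp st r > 0 then hlog st ! (cp st r - 1) else Bot) lc
                  else wge lc (MCWL mx d (take (cp st r) (hlog st)))"
  shows "read_ok st (ReadResponse (MCWL mx d (take (cp st r) (hlog st))) g)"
proof -
  let ?w = "MCWL mx d (take (cp st r) (hlog st))"
  have lc: "lc \<in> set (CL st)"
    using invariant_read_ok[OF I read] by (simp add: read_ok_def)
  have "wge ?w g"
    using harmonia_read_ghost_in_replica[OF I r read active] enabled MCWL_ge[OF max_choice]
    by (cases "g = Bot") auto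
  moreover have "?w = Bot \<or> ?w \<in> set (CL st)"
  proof (cases rb)
    case True
    then show ?thesis
      using MCWL_cases[OF max_choice] by (auto simp: CommittedLog_def dest: in_set_takeD)
  next
    case False
    then show ?thesis
      using MCWL_cases[OF max_choice] enabled committed_downward_closed[OF I lc]
      by (auto dest: in_set_takeD)
  qed
  ultimately show ?thesis
    by (simp add: read_ok_def)
qed

lemma invariant_step:
  assumes I: "invariant st" and "step D N Rep rb mx st st'"
  shows "invariant st'"
  using assms(2)
proof cases
  case (SendWrite s d n)
  then show ?thesis using invariant_SendWrite[OF I] by simp
next
  case (HandleWrite s n d)
  then show ?thesis using invariant_HandleWrite[OF I] by simp
next
  case (ProcessWriteCompletion w s)
  then show ?thesis using invariant_ProcessWriteCompletion[OF I] by simp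
next
  case (CommitWrite r)
  then show ?thesis using invariant_CommitWrite[OF I] by simp
next
  case (SendRead s d lr m)
  then show ?thesis using invariant_add_read[OF I read_ok_SendRead[OF I]] by simp
next
  case (HandleProtocolRead d g)
  then show ?thesis using invariant_add_read[OF I read_ok_HandleProtocolRead[OF I]] by simp
next
  case (HandleHarmoniaRead r d s lc g c w)
  then have "read_ok st (ReadResponse w g)"
    using read_ok_HandleHarmoniaRead[OF I] by blast
  then show ?thesis using invariant_add_read[OF I] HandleHarmoniaRead(1) by simp
next
  case SwitchFailover
  then show ?thesis using invariant_SwitchFailover[OF I] by simp
qed

lemma reachable_invariant: "reachable D N Rep rb mx st \<Longrightarrow> invariant st"
  by (induction rule: reachable.induct) (auto intro: invariant_init invariant_step)

end

theorem theorem1: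
  fixes D :: "'d set" and N :: nat and Rep :: "'r set" and isReadBehind :: bool
    and mx :: "'d wr set \<Rightarrow> 'd wr" and st :: "('d, 'r) hstate"
  assumes "finite D" and "N \<ge> 1" and "finite Rep" and "Rep \<noteq> {}"
    and "is_max_choice mx"
    and "reachable D N Rep isReadBehind mx st"
  shows "Linearizability Rep isReadBehind st"
proof -
  interpret harmonia Rep isReadBehind mx
    using assms by unfold_locales
  have "invariant st"
    using reachable_invariant assms(6) .
  then show ?thesis
    unfolding Linearizability_def using invariant_read_ok by (force simp: read_ok_def)
qed

end
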